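(* Let $q\ge 7$ be a prime power, $m=\lceil (q+1)/2\rceil$, and suppose $\mathcal{H}=\{h_1,\dots,h_m\}\subseteq\mathbb{F}_q^3$ is a short covering of $\mathbb{F}_q^3$. Then: (1) some vector of $\mathcal{H}$ has weight $3$; (2) for each $j\in\{1,2,3\}$ there is $h_k\in\mathcal{H}$ with $\pi_j(h_k)=0$; (3) $\mathcal{H}$ is $\mathbb{F}_q$-equivalent to a set of one of the following two forms: $\mathcal{H}_1=\{(1,1,1),(0,*,* ),( *,0,* ),( *,*,0),h_5,\dots,h_m\}$ or $\mathcal{H}_2=\{(1,1,1),(0,*,* ),( *,0,0),h_4,\dots,h_m\}$, where each $*$ denotes an arbitrary element of $\mathbb{F}_q$ and the $h_i$ denote arbitrary vectors of $\mathbb{F}_q^3$.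
   Context: $\mathbb{F}_q$ is the finite field with $q$ elements. Hamming distance $d(u,v)=|\{i:u_i\ne v_i\}|$; $B(u)=\{v:d(u,v)\le1\}$; $E(u)=\bigcup_{\lambda\in\mathbb{F}_q}B(\lambda u)$. $\mathcal{H}\subseteq\mathbb{F}_q^3$ is a short covering of $\mathbb{F}_q^3$ if $\bigcup_{h\in\mathcal{H}}E(h)=\mathbb{F}_q^3$. The weight of $u$ is $\omega(u)=|\{i:u_i\ne0\}|$, and $\pi_j(u_1,u_2,u_3)=u_j$. Two subsets of $\mathbb{F}_q^3$ are $\mathbb{F}_q$-equivalent if one is mapped onto the other by a map of the form $(u_1,u_2,u_3)\mapsto(a_1u_{\varphi(1)},a_2u_{\varphi(2)},a_3u_{\varphi(3)})$ with $\varphi$ a permutation of $\{1,2,3\}$ and $a_1,a_2,a_3\in\mathbb{F}_q^*$ (the action of the wreath product of $\mathbb{F}_q^*$ by $S_3$). *)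

theory Defs
  imports Complex_Main
begin

type_synonym 'a vec3 = "'a \<times> 'a \<times> 'a"

definition coord :: "'a vec3 \<Rightarrow> nat \<Rightarrow> 'a" where
  "coord u j = (if j = 1 then fst u else if j = 2 then fst (snd u) else snd (snd u))"

definition hdist :: "'a vec3 \<Rightarrow> 'a vec3 \<Rightarrow> nat" where
  "hdist u v = card {i \<in> {1,2,3::nat}. coord u i \<noteq> coord v i}"

definition ball1 :: "'a vec3 \<Rightarrow> 'a vec3 set" where
  "ball1 u = {v. hdist u v \<le> 1}"

definition scal :: "'a::times \<Rightarrow> 'a vec3 \<Rightarrow> 'a vec3" where
  "scal c u = (c * fst u, c * fst (snd u), c * snd (snd u))"

definition Ext :: "'a::field vec3 \<Rightarrow> 'a vec3 set" where
  "Ext u = (\<Union>c. ball1 (scal c u))"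

definition short_covering :: "'a::field vec3 set \<Rightarrow> bool" where
  "short_covering H \<longleftrightarrow> (\<Union>h\<in>H. Ext h) = UNIV"

definition weight :: "'a::zero vec3 \<Rightarrow> nat" where
  "weight u = card {i \<in> {1,2,3::nat}. coord u i \<noteq> 0}"

definition mono_map :: "(nat \<Rightarrow> nat) \<Rightarrow> 'a \<Rightarrow> 'a \<Rightarrow> 'a \<Rightarrow> 'a::times vec3 \<Rightarrow> 'a vec3" where
  "mono_map \<phi> a1 a2 a3 u = (a1 * coord u (\<phi> 1), a2 * coord u (\<phi> 2), a3 * coord u (\<phi> 3))"

definition Fq_equivalent :: "'a::field vec3 set \<Rightarrow> 'a vec3 set \<Rightarrow> bool" where
  "Fq_equivalent A B \<longleftrightarrow> (\<exists>\<phi> a1 a2 a3. bij_betw \<phi> {1,2,3::nat} {1,2,3} \<and>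
      a1 \<noteq> 0 \<and> a2 \<noteq> 0 \<and> a3 \<noteq> 0 \<and> mono_map \<phi> a1 a2 a3 ` A = B)"

definition form_H1 :: "'a::field vec3 set \<Rightarrow> bool" where
  "form_H1 S \<longleftrightarrow> (1,1,1) \<in> S \<and> (\<exists>u\<in>S. \<exists>v\<in>S. \<exists>w\<in>S.
      coord u 1 = 0 \<and> coord v 2 = 0 \<and> coord w 3 = 0 \<and>
      distinct [(1,1,1), u, v, w])"

definition form_H2 :: "'a::field vec3 set \<Rightarrow> bool" where
  "form_H2 S \<longleftrightarrow> (1,1,1) \<in> S \<and> (\<exists>u\<in>S. \<exists>v\<in>S.
      coord u 1 = 0 \<and> coord v 2 = 0 \<and> coord v 3 = 0 \<and>
      distinct [(1,1,1), u, v])"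

end

theory Submission
  imports Defs "HOL-Combinatorics.Transposition"
begin

text \<open>
  Write \<open>q\<close> for the size of the field; the bound on \<open>|H|\<close> gives \<open>|H| < q - 1\<close>.
  If \<open>h\<close> has a zero coordinate, a vector of weight 3 lies in \<open>E(h)\<close> only if it arises from a
  nonzero multiple of \<open>h\<close> by changing that coordinate, so \<open>E(h)\<close> contains at most \<open>(q-1)\<^sup>2\<close>
  of the \<open>(q-1)\<^sup>3\<close> vectors of weight 3. Similarly, a vector \<open>h\<close> with \<open>\<pi>\<^sub>1(h) \<noteq> 0\<close> covers
  at most \<open>q-1\<close> of the \<open>(q-1)\<^sup>2\<close> vectors \<open>(0,y,z)\<close> of weight 2, namely the \<open>(0, c h\<^sub>2, c h\<^sub>3)\<close>.
  Monomial maps preserve short coverings, which reduces every coordinate to the first one and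
  lets us scale a vector of weight 3 to \<open>(1,1,1)\<close>. Finally, \<open>H\<close> has form \<open>H\<^sub>2\<close> if it contains a
  vector of weight 1, and form \<open>H\<^sub>1\<close> otherwise, because then the nonzero vectors vanishing in
  the three different coordinates are distinct.
\<close>

lemma coord_simps [simp]:
  "coord u 1 = fst u" "coord u (Suc 0) = fst u" "coord u 2 = fst (snd u)" "coord u 3 = snd (snd u)"
  by (simp_all add: coord_def)

lemma coord_zero [simp]: "coord (0, 0, 0) i = 0"
  by (simp add: coord_def)

lemma weight_eq:
  "weight u = of_bool (fst u \<noteq> 0) + of_bool (fst (snd u) \<noteq> 0) + of_bool (snd (snd u) \<noteq> 0)"
proof -
  have "{i \<in> {1,2,3::nat}. coord u i \<noteq> 0} =
      (if fst u \<noteq> 0 then {1} else {}) \<union> (if fst (snd u) \<noteq> 0 then {2} else {})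
      \<union> (if snd (snd u) \<noteq> 0 then {3} else {})"
    by (auto simp: coord_def)
  then show ?thesis by (simp add: weight_def)
qed

lemma weight_eq_3_iff: "weight u = 3 \<longleftrightarrow> fst u \<noteq> 0 \<and> fst (snd u) \<noteq> 0 \<and> snd (snd u) \<noteq> 0"
  by (simp add: weight_eq of_bool_def)

lemma weight_eq_1_iff: "weight u = 1 \<longleftrightarrow> (\<exists>j\<in>{1,2,3}. \<forall>i\<in>{1,2,3::nat}. coord u i = 0 \<longleftrightarrow> i \<noteq> j)"
  by (simp add: weight_eq of_bool_def split: if_splits)

lemma mem_ball1_iff:
  "v \<in> ball1 u \<longleftrightarrow> (fst u = fst v \<and> fst (snd u) = fst (snd v)) \<or> (fst u = fst v \<and> snd (snd u) = snd (snd v))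
      \<or> (fst (snd u) = fst (snd v) \<and> snd (snd u) = snd (snd v))"
proof -
  have "{i \<in> {1,2,3::nat}. coord u i \<noteq> coord v i} =
      (if fst u \<noteq> fst v then {1} else {}) \<union> (if fst (snd u) \<noteq> fst (snd v) then {2} else {})
      \<union> (if snd (snd u) \<noteq> snd (snd v) then {3} else {})"
    by (auto simp: coord_def)
  then show ?thesis by (simp add: ball1_def hdist_def)
qed

lemma mono_map_scal:
  fixes a1 :: "'a::comm_semiring_1"
  shows "mono_map \<phi> a1 a2 a3 (scal c u) = scal c (mono_map \<phi> a1 a2 a3 u)"
  by (simp add: mono_map_def scal_def coord_def mult_ac)

lemma card_Collect_bij_betw:
  assumes "bij_betw \<phi> A A"
  shows "card {i \<in> A. P (\<phi> i)} = card {k \<in> A. P k}"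
proof -
  have "\<phi> ` {i \<in> A. P (\<phi> i)} = {k \<in> A. P k}"
    using assms by (auto simp: bij_betw_def)
  moreover have "inj_on \<phi> {i \<in> A. P (\<phi> i)}"
    using assms by (auto simp: bij_betw_def intro: inj_on_subset)
  ultimately show ?thesis by (metis card_image)
qed

lemma hdist_mono_map:
  fixes a1 :: "'a::field"
  assumes \<phi>: "bij_betw \<phi> {1,2,3::nat} {1,2,3}" and a: "a1 \<noteq> 0" "a2 \<noteq> 0" "a3 \<noteq> 0"
  shows "hdist (mono_map \<phi> a1 a2 a3 u) (mono_map \<phi> a1 a2 a3 v) = hdist u v"
proof -
  have "{i \<in> {1,2,3::nat}. coord (mono_map \<phi> a1 a2 a3 u) i \<noteq> coord (mono_map \<phi> a1 a2 a3 v) i}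
      = {i \<in> {1,2,3}. coord u (\<phi> i) \<noteq> coord v (\<phi> i)}"
    using a by (auto simp: mono_map_def)
  then show ?thesis
    unfolding hdist_def using card_Collect_bij_betw[OF \<phi>] by simp
qed

lemma inj_mono_map:
  fixes a1 :: "'a::field"
  assumes "bij_betw \<phi> {1,2,3::nat} {1,2,3}" and "a1 \<noteq> 0" "a2 \<noteq> 0" "a3 \<noteq> 0"
  shows "inj (mono_map \<phi> a1 a2 a3)"
proof (rule injI)
  fix u v assume "mono_map \<phi> a1 a2 a3 u = mono_map \<phi> a1 a2 a3 v"
  then have "hdist u v = 0"
    using hdist_mono_map[OF assms, of u v] by (simp add: hdist_def)
  then have "coord u i = coord v i" if "i \<in> {1,2,3}" for i
    using that by (auto simp: hdist_def)
  from this[of 1] this[of 2] this[of 3] show "u = v"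
    by (simp add: prod_eq_iff)
qed

lemma short_covering_mono_map:
  fixes H :: "'a::{field,finite} vec3 set"
  assumes "bij_betw \<phi> {1,2,3::nat} {1,2,3}" and "a1 \<noteq> 0" "a2 \<noteq> 0" "a3 \<noteq> 0"
    and H: "short_covering H"
  shows "short_covering (mono_map \<phi> a1 a2 a3 ` H)"
  unfolding short_covering_def
proof (intro set_eqI iffI)
  let ?M = "mono_map \<phi> a1 a2 a3"
  fix v
  obtain w where v: "v = ?M w"
    using finite_UNIV_inj_surj[OF finite_UNIV inj_mono_map[OF assms(1-4)]] by blast
  have "w \<in> (\<Union>h\<in>H. Ext h)"
    using H by (simp add: short_covering_def)
  then obtain h c where "h \<in> H" "w \<in> ball1 (scal c h)"
    by (auto simp: Ext_def)
  then have "v \<in> ball1 (scal c (?M h))"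
    by (simp add: v ball1_def hdist_mono_map[OF assms(1-4)] flip: mono_map_scal)
  with \<open>h \<in> H\<close> show "v \<in> (\<Union>h\<in>?M ` H. Ext h)"
    by (auto simp: Ext_def)
qed simp

lemma card_le_mult_card_if_covered:
  assumes "finite H" "finite A" "C \<subseteq> (\<Union>h\<in>H. f h ` A)"
  shows "card C \<le> card H * card A"
proof -
  have "card C \<le> card (\<Union>h\<in>H. f h ` A)"
    using assms by (intro card_mono) auto
  also have "\<dots> \<le> (\<Sum>h\<in>H. card (f h ` A))"
    using assms(1) by (rule card_UN_le)
  also have "\<dots> \<le> (\<Sum>h\<in>H. card A)"
    by (intro sum_mono card_image_le assms(2))
  finally show ?thesis by simp
qed

lemma small_short_covering_has_zero_first_coord:
  fixes H :: "'a::{field,finite} vec3 set"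
  assumes cov: "short_covering H" and small: "card H < card (UNIV :: 'a set) - 1"
  shows "\<exists>h\<in>H. h \<noteq> (0,0,0) \<and> fst h = 0"
proof (rule ccontr)
  assume "\<not> ?thesis"
  then have no: "fst h = 0 \<Longrightarrow> h = (0,0,0)" if "h \<in> H" for h
    using that by blast
  define nz where "nz = UNIV - {0::'a}"
  have "{0::'a} \<times> nz \<times> nz \<subseteq> (\<Union>h\<in>H. (\<lambda>c. (0, c * fst (snd h), c * snd (snd h))) ` nz)"
  proof
    fix v assume "v \<in> {0::'a} \<times> nz \<times> nz"
    then obtain y z where v: "v = (0, y, z)" "y \<noteq> 0" "z \<noteq> 0"
      by (auto simp: nz_def)
    have "v \<in> (\<Union>h\<in>H. Ext h)"
      using cov by (simp add: short_covering_def)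
    then obtain h c where h: "h \<in> H" "v \<in> ball1 (scal c h)"
      by (auto simp: Ext_def)
    then have "c \<noteq> 0 \<and> y = c * fst (snd h) \<and> z = c * snd (snd h)"
      using v no[OF h(1)] by (cases h) (auto simp: mem_ball1_iff scal_def)
    with h(1) v(1) show "v \<in> (\<Union>h\<in>H. (\<lambda>c. (0, c * fst (snd h), c * snd (snd h))) ` nz)"
      by (auto simp: nz_def)
  qed
  then have "card ({0::'a} \<times> nz \<times> nz) \<le> card H * card nz"
    by (intro card_le_mult_card_if_covered) simp_all
  moreover have "card nz = card (UNIV :: 'a set) - 1"
    by (simp add: nz_def card_Diff_singleton)
  ultimately show False
    using small by (simp add: card_cartesian_product)
qed

lemma small_short_covering_has_full_weight:
  fixes H :: "'a::{field,finite} vec3 set"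
  assumes cov: "short_covering H" and small: "card H < card (UNIV :: 'a set) - 1"
  shows "\<exists>h\<in>H. weight h = 3"
proof (rule ccontr)
  assume "\<not> ?thesis"
  then have no: "fst h = 0 \<or> fst (snd h) = 0 \<or> snd (snd h) = 0" if "h \<in> H" for h
    using that by (auto simp: weight_eq_3_iff)
  define nz where "nz = UNIV - {0::'a}"
  define F where "F h = (\<lambda>(t, c). if fst h = 0 then (t, c * fst (snd h), c * snd (snd h))
      else if fst (snd h) = 0 then (c * fst h, t, c * snd (snd h))
      else (c * fst h, c * fst (snd h), t))" for h :: "'a vec3"
  have "nz \<times> nz \<times> nz \<subseteq> (\<Union>h\<in>H. F h ` (nz \<times> nz))"
  proof
    fix v assume "v \<in> nz \<times> nz \<times> nz"
    then obtain x y z where v: "v = (x, y, z)" "x \<noteq> 0" "y \<noteq> 0" "z \<noteq> 0"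
      by (auto simp: nz_def)
    have "v \<in> (\<Union>h\<in>H. Ext h)"
      using cov by (simp add: short_covering_def)
    then obtain h c where h: "h \<in> H" "v \<in> ball1 (scal c h)"
      by (auto simp: Ext_def)
    define t where "t = (if fst h = 0 then x else if fst (snd h) = 0 then y else z)"
    have "c \<noteq> 0"
      using h v by (auto simp: mem_ball1_iff scal_def)
    moreover have "v = F h (t, c)"
      using h v no[OF h(1)] by (cases h) (auto simp: F_def t_def mem_ball1_iff scal_def)
    moreover have "t \<noteq> 0"
      using v by (simp add: t_def)
    ultimately show "v \<in> (\<Union>h\<in>H. F h ` (nz \<times> nz))"
      using h(1) by (auto simp: nz_def)
  qed
  then have "card (nz \<times> nz \<times> nz) \<le> card H * card (nz \<times> nz)"
    by (intro card_le_mult_card_if_covered) simp_all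
  moreover have "card nz = card (UNIV :: 'a set) - 1"
    by (simp add: nz_def card_Diff_singleton)
  ultimately show False
    using small by (simp add: card_cartesian_product)
qed

lemma small_short_covering_has_zero_coord:
  fixes H :: "'a::{field,finite} vec3 set"
  assumes cov: "short_covering H" and small: "card H < card (UNIV :: 'a set) - 1"
    and j: "j \<in> {1,2,3}"
  shows "\<exists>h\<in>H. h \<noteq> (0,0,0) \<and> coord h j = 0"
proof -
  let ?M = "mono_map (transpose 1 j) 1 1 (1::'a)"
  have \<tau>: "bij_betw (transpose 1 j) {1,2,3::nat} {1,2,3}"
    using j by simp
  have "short_covering (?M ` H)"
    using short_covering_mono_map[OF \<tau> _ _ _ cov] by simp
  moreover have "card (?M ` H) = card H"
    using inj_mono_map[OF \<tau> one_neq_zero one_neq_zero one_neq_zero]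
    by (meson card_image inj_on_subset subset_UNIV)
  ultimately obtain h where h: "h \<in> H" "?M h \<noteq> (0,0,0)" "fst (?M h) = 0"
    using small_short_covering_has_zero_first_coord small by fastforce
  have "h \<noteq> (0,0,0)"
    using h(2) by (auto simp: mono_map_def)
  with h show ?thesis
    by (auto simp: mono_map_def)
qed

lemma normalize_at_full_weight_vector:
  fixes H :: "'a::field vec3 set"
  assumes \<phi>: "bij_betw \<phi> {1,2,3::nat} {1,2,3}" and h0: "weight h0 = 3"
  obtains M where "Fq_equivalent H (M ` H)" "inj M" "M h0 = (1,1,1)"
    "\<And>u i. i \<in> {1,2,3} \<Longrightarrow> coord (M u) i = 0 \<longleftrightarrow> coord u (\<phi> i) = 0"
proof -
  have "coord h0 (\<phi> i) \<noteq> 0" if "i \<in> {1,2,3}" for i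
    using h0 bij_betwE[OF \<phi>] that by (auto simp: weight_eq_3_iff coord_def)
  then have a: "inverse (coord h0 (\<phi> 1)) \<noteq> 0" "inverse (coord h0 (\<phi> 2)) \<noteq> 0"
      "inverse (coord h0 (\<phi> 3)) \<noteq> 0"
    by simp_all
  let ?M = "mono_map \<phi> (inverse (coord h0 (\<phi> 1))) (inverse (coord h0 (\<phi> 2))) (inverse (coord h0 (\<phi> 3)))"
  show thesis
  proof
    show "Fq_equivalent H (?M ` H)"
      unfolding Fq_equivalent_def using \<phi> a by blast
    show "inj ?M"
      using inj_mono_map[OF \<phi> a] .
    show "?M h0 = (1,1,1)"
      using a by (simp add: mono_map_def)
    show "coord (?M u) i = 0 \<longleftrightarrow> coord u (\<phi> i) = 0" if "i \<in> {1,2,3}" for u i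
      using a that by (auto simp: mono_map_def)
  qed
qed

lemma Fq_equivalent_form_H2:
  fixes H :: "'a::field vec3 set"
  assumes \<phi>: "bij_betw \<phi> {1,2,3::nat} {1,2,3}" and h0: "h0 \<in> H" "weight h0 = 3"
    and u: "u \<in> H" "coord u (\<phi> 1) = 0"
    and v: "v \<in> H" "coord v (\<phi> 1) \<noteq> 0" "coord v (\<phi> 2) = 0" "coord v (\<phi> 3) = 0"
  shows "\<exists>S. Fq_equivalent H S \<and> form_H2 S"
proof -
  obtain M where M: "Fq_equivalent H (M ` H)" "M h0 = (1,1,1)"
    and zero: "\<And>u i. i \<in> {1,2,3} \<Longrightarrow> coord (M u) i = 0 \<longleftrightarrow> coord u (\<phi> i) = 0"
    using normalize_at_full_weight_vector[OF \<phi> h0(2)] by metis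
  have "coord (M u) 1 = 0" "coord (M v) 1 \<noteq> 0" "coord (M v) 2 = 0" "coord (M v) 3 = 0"
    using zero[of 1 u] zero[of 1 v] zero[of 2 v] zero[of 3 v] u v by simp_all
  then have "form_H2 (M ` H)"
    unfolding form_H2_def using M(2) h0(1) u(1) v(1) by (force simp: prod_eq_iff)
  with M(1) show ?thesis by blast
qed

lemma Fq_equivalent_form_H1:
  fixes H :: "'a::field vec3 set"
  assumes h0: "h0 \<in> H" "weight h0 = 3"
    and uvw: "u \<in> H" "v \<in> H" "w \<in> H" "distinct [u, v, w]"
    and zero: "coord u 1 = 0" "coord v 2 = 0" "coord w 3 = 0"
  shows "\<exists>S. Fq_equivalent H S \<and> form_H1 S"
proof -
  have id: "bij_betw id {1,2,3::nat} {1,2,3}"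
    by simp
  obtain M where M: "Fq_equivalent H (M ` H)" "inj M" "M h0 = (1,1,1)"
    and zero_M: "\<And>u i. i \<in> {1,2,3} \<Longrightarrow> coord (M u) i = 0 \<longleftrightarrow> coord u i = 0"
    using normalize_at_full_weight_vector[OF id h0(2)] by (metis id_apply)
  have "coord (M u) 1 = 0" "coord (M v) 2 = 0" "coord (M w) 3 = 0"
    using zero_M[of 1 u] zero_M[of 2 v] zero_M[of 3 w] zero by simp_all
  moreover have "distinct [M u, M v, M w]"
    using uvw(4) M(2) by (auto dest: injD)
  ultimately have "form_H1 (M ` H)"
    unfolding form_H1_def using M(3) h0(1) uvw(1-3) by (force simp: prod_eq_iff)
  with M(1) show ?thesis by blast
qed

lemma ceiling_half_succ_lt:
  assumes "5 \<le> q"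
  shows "nat \<lceil>(real q + 1) / 2\<rceil> < q - 1"
proof -
  have "\<lceil>(real q + 1) / 2\<rceil> < (real q + 1) / 2 + 1" by linarith
  also have "\<dots> \<le> real q - 1" using assms by (simp add: field_simps)
  finally show ?thesis using assms by linarith
qed

theorem theorem18:
  fixes H :: "('a::{field,finite}) vec3 set"
  assumes "card (UNIV :: 'a set) \<ge> 7"
    and "card H = nat \<lceil>(real (card (UNIV :: 'a set)) + 1) / 2\<rceil>"
    and "short_covering H"
  shows "(\<exists>h\<in>H. weight h = 3)
    \<and> (\<forall>j\<in>{1,2,3::nat}. \<exists>h\<in>H. coord h j = 0)
    \<and> (\<exists>S. Fq_equivalent H S \<and> (form_H1 S \<or> form_H2 S))"
proof -
  have small: "card H < card (UNIV :: 'a set) - 1"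
    using assms(1,2) ceiling_half_succ_lt by simp
  obtain h0 where h0: "h0 \<in> H" "weight h0 = 3"
    using small_short_covering_has_full_weight[OF assms(3) small] by blast
  have zero: "\<exists>h\<in>H. h \<noteq> (0,0,0) \<and> coord h j = 0" if "j \<in> {1,2,3}" for j
    using small_short_covering_has_zero_coord[OF assms(3) small that] .
  have "\<exists>S. Fq_equivalent H S \<and> (form_H1 S \<or> form_H2 S)"
  proof (cases "\<exists>v\<in>H. weight v = 1")
    case True
    then obtain v j where v: "v \<in> H" "j \<in> {1,2,3}" "\<forall>i\<in>{1,2,3}. coord v i = 0 \<longleftrightarrow> i \<noteq> j"
      unfolding weight_eq_1_iff by blast
    obtain u where u: "u \<in> H" "coord u j = 0"
      using zero[OF v(2)] by blast
    have "bij_betw (transpose 1 j) {1,2,3::nat} {1,2,3}"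
      using v(2) by simp
    from Fq_equivalent_form_H2[OF this h0 u(1) _ v(1)] show ?thesis
      using u v by (auto simp: transpose_def)
  next
    case False
    obtain u1 u2 u3 where u: "u1 \<in> H" "u2 \<in> H" "u3 \<in> H"
      "u1 \<noteq> (0,0,0)" "u2 \<noteq> (0,0,0)" "u3 \<noteq> (0,0,0)"
      "coord u1 1 = 0" "coord u2 2 = 0" "coord u3 3 = 0"
      using zero by (meson insertI1 insertI2)
    then have "distinct [u1, u2, u3]"
      using False by (auto simp: weight_eq prod_eq_iff)
    with Fq_equivalent_form_H1[OF h0 u(1-3)] u show ?thesis by blast
  qed
  with h0 zero show ?thesis by blast
qed

end
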